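(* Let $X_r$ be a Dynkin diagram of finite type with dual Coxeter number $h^\vee$ and involution $\omega$. (i) In the abelian group $\mathcal{T}_0(X_r)$: $T^{(a)}(u+h^\vee)=T^{(\omega(a))}(u)^{-1}$ and $T^{(a)}(u+2h^\vee)=T^{(a)}(u)$ for all $a\in I$, $u\in\frac1t\mathbb{Z}$. (ii) In the abelian group $\mathcal{Y}_0(X_r)$: $Y^{(a)}(u+h^\vee)=Y^{(\omega(a))}(u)^{-1}$ and $Y^{(a)}(u+2h^\vee)=Y^{(a)}(u)$ for all $a\in I$, $u\in\frac1t\mathbb{Z}$.
   Context: Enumeration of $I=\{1,\dots,r\}$: $A_r$: chain; $B_r$: chain with double bond between $r-1,r$, $\alpha_r$ short; $C_r$: same, $\alpha_r$ long, others short; $D_r$: chain $1-\cdots-(r-2)$, $r-1,r$ joined to $r-2$; $E_6$: chain $1-2-3-5-6$, $4$ joined to $3$; $E_7$: chain $1-\cdots-6$, $7$ joined to $3$; $E_8$: chain $1-\cdots-7$, $8$ joined to $5$; $F_4$: chain $1-2-3-4$, double bond between $2,3$, $\alpha_1,\alpha_2$ long; $G_2$: $\alpha_1$ long. $C$ is the Cartan matrix; $t=1$ (simply laced), $2$ ($B_r,C_r,F_4$), $3$ ($G_2$). $h^\vee$: $A_r$: $r+1$, $B_r$: $2r-1$, $C_r$: $r+1$, $D_r$: $2r-2$, $E_6$: 12, $E_7$: 18, $E_8$: 30, $F_4$: 9, $G_2$: 4. $\omega$ is the identity except: $\omega(a)=r+1-a$ for $A_r$; $\omega$ swaps $r-1,r$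 for $D_r$ with $r$ odd; $\omega$ swaps $1\leftrightarrow6$, $2\leftrightarrow5$ for $E_6$. $\mathcal{T}_0(X_r)$ is the abelian group (written multiplicatively) generated by $T^{(a)}(u)$ ($a\in I$, $u\in\frac1t\mathbb{Z}$) with relations (with $T^{(0)}(u)=1$): simply laced: $T^{(a)}(u-1)T^{(a)}(u+1)=\prod_{b:C_{ab}=-1}T^{(b)}(u)$; $B_r$: $T^{(a)}(u-1)T^{(a)}(u+1)=T^{(a-1)}(u)T^{(a+1)}(u)$ ($a\le r-2$), $T^{(r-1)}(u-1)T^{(r-1)}(u+1)=T^{(r-2)}(u)T^{(r)}(u)$, $T^{(r)}(u-\frac12)T^{(r)}(u+\frac12)=T^{(r-1)}(u-\frac12)T^{(r-1)}(u+\frac12)$; $C_r$: $T^{(a)}(u-\frac12)T^{(a)}(u+\frac12)=T^{(a-1)}(u)T^{(a+1)}(u)$ ($a\le r-2$), $T^{(r-1)}(u-\frac12)T^{(r-1)}(u+\frac12)=T^{(r-2)}(u)T^{(r)}(u-\frac12)T^{(r)}(u+\frac12)$, $T^{(r)}(u-1)T^{(r)}(u+1)=T^{(r-1)}(u)$; $F_4$: $T^{(1)}(u-1)T^{(1)}(u+1)=T^{(2)}(u)$, $T^{(2)}(u-1)T^{(2)}(u+1)=T^{(1)}(u)T^{(3)}(u)$, $T^{(3)}(u-\frac12)T^{(3)}(u+\frac12)=T^{(2)}(u-\frac12)T^{(2)}(u+\frac12)T^{(4)}(u)$, $T^{(4)}(u-\frac12)T^{(4)}(u+\frac12)=T^{(3)}(u)$;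 $G_2$: $T^{(1)}(u-1)T^{(1)}(u+1)=T^{(2)}(u)$, $T^{(2)}(u-\frac13)T^{(2)}(u+\frac13)=T^{(1)}(u-\frac23)T^{(1)}(u)T^{(1)}(u+\frac23)$. $\mathcal{Y}_0(X_r)$ is the abelian group generated by $Y^{(a)}(u)$ with relations (with $Y^{(0)}(u)=1$): simply laced: $Y^{(a)}(u-1)Y^{(a)}(u+1)=\prod_{b:C_{ab}=-1}Y^{(b)}(u)$; $B_r$: $Y^{(a)}(u-1)Y^{(a)}(u+1)=Y^{(a-1)}(u)Y^{(a+1)}(u)$ ($a\le r-2$), $Y^{(r-1)}(u-1)Y^{(r-1)}(u+1)=Y^{(r-2)}(u)Y^{(r)}(u-\frac12)Y^{(r)}(u+\frac12)$, $Y^{(r)}(u-\frac12)Y^{(r)}(u+\frac12)=Y^{(r-1)}(u)$; $C_r$: $Y^{(a)}(u-\frac12)Y^{(a)}(u+\frac12)=Y^{(a-1)}(u)Y^{(a+1)}(u)$ ($a\le r-2$), $Y^{(r-1)}(u-\frac12)Y^{(r-1)}(u+\frac12)=Y^{(r-2)}(u)Y^{(r)}(u)$, $Y^{(r)}(u-1)Y^{(r)}(u+1)=Y^{(r-1)}(u-\frac12)Y^{(r-1)}(u+\frac12)$; $F_4$: $Y^{(1)}(u-1)Y^{(1)}(u+1)=Y^{(2)}(u)$, $Y^{(2)}(u-1)Y^{(2)}(u+1)=Y^{(1)}(u)Y^{(3)}(u-\frac12)Y^{(3)}(u+\frac12)$, $Y^{(3)}(u-\frac12)Y^{(3)}(u+\frac12)=Y^{(2)}(u)Y^{(4)}(u)$,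 $Y^{(4)}(u-\frac12)Y^{(4)}(u+\frac12)=Y^{(3)}(u)$; $G_2$: $Y^{(1)}(u-1)Y^{(1)}(u+1)=Y^{(2)}(u-\frac23)Y^{(2)}(u)Y^{(2)}(u+\frac23)$, $Y^{(2)}(u-\frac13)Y^{(2)}(u+\frac13)=Y^{(1)}(u)$. *)

theory Defs
  imports Main
begin

datatype dynkin = A nat | B nat | C nat | D nat | E6 | E7 | E8 | F4 | G2

fun valid_dynkin :: "dynkin \<Rightarrow> bool" where
  "valid_dynkin (A r) = (r \<ge> 1)"
| "valid_dynkin (B r) = (r \<ge> 2)"
| "valid_dynkin (C r) = (r \<ge> 2)"
| "valid_dynkin (D r) = (r \<ge> 4)"
| "valid_dynkin _ = True"

fun rank :: "dynkin \<Rightarrow> nat" where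
  "rank (A r) = r" | "rank (B r) = r" | "rank (C r) = r" | "rank (D r) = r"
| "rank E6 = 6" | "rank E7 = 7" | "rank E8 = 8" | "rank F4 = 4" | "rank G2 = 2"

definition Iset :: "dynkin \<Rightarrow> nat set" where
  "Iset X = {1..rank X}"

fun tnum :: "dynkin \<Rightarrow> int" where
  "tnum (B r) = 2" | "tnum (C r) = 2" | "tnum F4 = 2" | "tnum G2 = 3" | "tnum _ = 1"

fun simply_laced :: "dynkin \<Rightarrow> bool" where
  "simply_laced (A r) = True" | "simply_laced (D r) = True"
| "simply_laced E6 = True" | "simply_laced E7 = True" | "simply_laced E8 = True"
| "simply_laced _ = False"

fun hdual :: "dynkin \<Rightarrow> int" where
  "hdual (A r) = int r + 1" | "hdual (B r) = 2 * int r - 1" | "hdual (C r) = int r + 1"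
| "hdual (D r) = 2 * int r - 2" | "hdual E6 = 12" | "hdual E7 = 18" | "hdual E8 = 30"
| "hdual F4 = 9" | "hdual G2 = 4"

fun omega :: "dynkin \<Rightarrow> nat \<Rightarrow> nat" where
  "omega (A r) a = r + 1 - a"
| "omega (D r) a = (if odd r then (if a = r - 1 then r else if a = r then r - 1 else a) else a)"
| "omega E6 a = (if a = 1 then 6 else if a = 6 then 1 else if a = 2 then 5
                 else if a = 5 then 2 else a)"
| "omega _ a = a"

text \<open>Edges of the simply laced diagrams (unordered), i.e. C_ab = -1.\<close>
fun sl_edges :: "dynkin \<Rightarrow> (nat \<times> nat) set" where
  "sl_edges (A r) = {(a, a + 1) | a. 1 \<le> a \<and> a + 1 \<le> r}"
| "sl_edges (D r) = {(a, a + 1) | a. 1 \<le> a \<and> a + 1 \<le> r - 1} \<union> {(r - 2, r)}"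
| "sl_edges E6 = {(1,2),(2,3),(3,5),(5,6),(3,4)}"
| "sl_edges E7 = {(1,2),(2,3),(3,4),(4,5),(5,6),(3,7)}"
| "sl_edges E8 = {(1,2),(2,3),(3,4),(4,5),(5,6),(6,7),(5,8)}"
| "sl_edges _ = {}"

definition adj :: "dynkin \<Rightarrow> nat \<Rightarrow> nat \<Rightarrow> bool" where
  "adj X a b \<longleftrightarrow> (a, b) \<in> sl_edges X \<or> (b, a) \<in> sl_edges X"

text \<open>Conventions: abelian groups are written additively (type class ab_group_add),
  so products become sums and inverses become negation. The generator
  T^(a)(u), u \<in> (1/t)Z, is represented as T a k with u = k / t (k :: int).
  The convention T^(0)(u) = 1 becomes the value 0 via z0.\<close>

definition z0 :: "(nat \<Rightarrow> int \<Rightarrow> 'g::ab_group_add) \<Rightarrow> nat \<Rightarrow> int \<Rightarrow> 'g" where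
  "z0 T a k = (if a = 0 then 0 else T a k)"

definition T_sys :: "dynkin \<Rightarrow> (nat \<Rightarrow> int \<Rightarrow> 'g::ab_group_add) \<Rightarrow> bool" where
  "T_sys X T \<longleftrightarrow>
    (simply_laced X \<longrightarrow> (\<forall>a\<in>Iset X. \<forall>k.
        T a (k - 1) + T a (k + 1) = (\<Sum>b\<in>{b\<in>Iset X. adj X a b}. T b k)))
  \<and> (\<forall>r. X = B r \<longrightarrow> (\<forall>k.
        (\<forall>a. 1 \<le> a \<and> a \<le> r - 2 \<longrightarrow> T a (k - 2) + T a (k + 2) = z0 T (a - 1) k + T (a + 1) k)
      \<and> T (r - 1) (k - 2) + T (r - 1) (k + 2) = z0 T (r - 2) k + T r k
      \<and> T r (k - 1) + T r (k + 1) = T (r - 1) (k - 1) + T (r - 1) (k + 1)))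
  \<and> (\<forall>r. X = C r \<longrightarrow> (\<forall>k.
        (\<forall>a. 1 \<le> a \<and> a \<le> r - 2 \<longrightarrow> T a (k - 1) + T a (k + 1) = z0 T (a - 1) k + T (a + 1) k)
      \<and> T (r - 1) (k - 1) + T (r - 1) (k + 1) = z0 T (r - 2) k + T r (k - 1) + T r (k + 1)
      \<and> T r (k - 2) + T r (k + 2) = T (r - 1) k))
  \<and> (X = F4 \<longrightarrow> (\<forall>k.
        T 1 (k - 2) + T 1 (k + 2) = T 2 k
      \<and> T 2 (k - 2) + T 2 (k + 2) = T 1 k + T 3 k
      \<and> T 3 (k - 1) + T 3 (k + 1) = T 2 (k - 1) + T 2 (k + 1) + T 4 k
      \<and> T 4 (k - 1) + T 4 (k + 1) = T 3 k))
  \<and> (X = G2 \<longrightarrow> (\<forall>k.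
        T 1 (k - 3) + T 1 (k + 3) = T 2 k
      \<and> T 2 (k - 1) + T 2 (k + 1) = T 1 (k - 2) + T 1 k + T 1 (k + 2)))"

definition Y_sys :: "dynkin \<Rightarrow> (nat \<Rightarrow> int \<Rightarrow> 'g::ab_group_add) \<Rightarrow> bool" where
  "Y_sys X Y \<longleftrightarrow>
    (simply_laced X \<longrightarrow> (\<forall>a\<in>Iset X. \<forall>k.
        Y a (k - 1) + Y a (k + 1) = (\<Sum>b\<in>{b\<in>Iset X. adj X a b}. Y b k)))
  \<and> (\<forall>r. X = B r \<longrightarrow> (\<forall>k.
        (\<forall>a. 1 \<le> a \<and> a \<le> r - 2 \<longrightarrow> Y a (k - 2) + Y a (k + 2) = z0 Y (a - 1) k + Y (a + 1) k)
      \<and> Y (r - 1) (k - 2) + Y (r - 1) (k + 2) = z0 Y (r - 2) k + Y r (k - 1) + Y r (k + 1)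
      \<and> Y r (k - 1) + Y r (k + 1) = Y (r - 1) k))
  \<and> (\<forall>r. X = C r \<longrightarrow> (\<forall>k.
        (\<forall>a. 1 \<le> a \<and> a \<le> r - 2 \<longrightarrow> Y a (k - 1) + Y a (k + 1) = z0 Y (a - 1) k + Y (a + 1) k)
      \<and> Y (r - 1) (k - 1) + Y (r - 1) (k + 1) = z0 Y (r - 2) k + Y r k
      \<and> Y r (k - 2) + Y r (k + 2) = Y (r - 1) (k - 1) + Y (r - 1) (k + 1)))
  \<and> (X = F4 \<longrightarrow> (\<forall>k.
        Y 1 (k - 2) + Y 1 (k + 2) = Y 2 k
      \<and> Y 2 (k - 2) + Y 2 (k + 2) = Y 1 k + Y 3 (k - 1) + Y 3 (k + 1)
      \<and> Y 3 (k - 1) + Y 3 (k + 1) = Y 2 k + Y 4 k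
      \<and> Y 4 (k - 1) + Y 4 (k + 1) = Y 3 k))
  \<and> (X = G2 \<longrightarrow> (\<forall>k.
        Y 1 (k - 3) + Y 1 (k + 3) = Y 2 (k - 2) + Y 2 k + Y 2 (k + 2)
      \<and> Y 2 (k - 1) + Y 2 (k + 1) = Y 1 k))"

end

theory Submission
  imports Defs "HOL-Library.Multiset"
begin

(*
  Both systems are linear recurrences in an abelian group. For the classical types, the nodes
  along the long part of the diagram, closed off by a suitable combination of the remaining
  nodes, form a chain U 1, ..., U n with U a (k - s) + U a (k + s) = U (a - 1) k + U (a + 1) k
  and U 0 = 0. Along such a chain every U a is a sum of shifts of U 1, so the relation at the
  end of the chain forces U 1, and with it every U a, to change sign under the shift t h\<^sup>\<or>;
  the nodes beyond the chain follow by telescoping. For the exceptional types the same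
  antiperiodicity is an explicit integer combination of shifted relations, which is checked
  here by formal cancellation. Periodicity with 2 t h\<^sup>\<or> follows because omega is an involution.
*)

definition twisted_antiperiodic ::
  "(nat \<Rightarrow> int \<Rightarrow> 'g::ab_group_add) \<Rightarrow> nat set \<Rightarrow> int \<Rightarrow> (nat \<Rightarrow> nat) \<Rightarrow> bool" where
  "twisted_antiperiodic V I H \<omega> \<longleftrightarrow> (\<forall>a\<in>I. \<forall>k. V a (k + H) = - V (\<omega> a) k)"

lemma twisted_antiperiodic_periodic:
  assumes anti: "twisted_antiperiodic V I H \<omega>" and inv: "\<forall>a\<in>I. \<omega> a \<in> I \<and> \<omega> (\<omega> a) = a"
    and a: "a \<in> I"
  shows "V a (k + 2 * H) = V a k"
proof -
  have "V a (k + H + H) = - V (\<omega> a) (k + H)"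
    using anti a unfolding twisted_antiperiodic_def by blast
  also have "\<dots> = V a k"
    using anti a inv by (simp add: twisted_antiperiodic_def)
  finally show ?thesis
    by (simp add: add.assoc)
qed

lemma omega_involutive: "valid_dynkin X \<Longrightarrow> a \<in> Iset X \<Longrightarrow> omega X a \<in> Iset X \<and> omega X (omega X a) = a"
  by (cases X) (auto simp: Iset_def)

lemma twisted_antiperiodic_dynkin:
  assumes "valid_dynkin X" and "twisted_antiperiodic V (Iset X) (tnum X * hdual X) (omega X)"
    and "a \<in> Iset X"
  shows "V a (k + tnum X * hdual X) = - V (omega X a) k \<and> V a (k + 2 * tnum X * hdual X) = V a k"
  using assms twisted_antiperiodic_periodic[OF assms(2) _ assms(3), of k] omega_involutive[OF assms(1)]
  by (simp add: twisted_antiperiodic_def mult.assoc)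

section \<open>Chains of type A\<close>

locale A_chain =
  fixes U :: "nat \<Rightarrow> int \<Rightarrow> 'g::ab_group_add" and n :: nat and s :: int
  assumes zero: "U 0 k = 0"
    and recurrence: "1 \<le> a \<Longrightarrow> a \<le> n \<Longrightarrow> U a (k - s) + U a (k + s) = U (a - 1) k + U (a + 1) k"
begin

lemma forward: "1 \<le> a \<Longrightarrow> a \<le> n + 1 \<Longrightarrow> U a (k + s) = U (a - 1) k + U 1 (k + s * int a)"
proof (induction a arbitrary: k)
  case 0
  then show ?case by simp
next
  case (Suc a)
  show ?case
  proof (cases "a = 0")
    case True
    then show ?thesis by (simp add: zero)
  next
    case False
    have "U (a + 1) (k + s) = U a k + U a (k + 2 * s) - U (a - 1) (k + s)"
      using recurrence[of a "k + s"] False Suc.prems by (simp add: algebra_simps)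
    also have "U a (k + 2 * s) = U (a - 1) (k + s) + U 1 (k + s + s * int a)"
      using Suc.IH[of "k + s"] False Suc.prems by (simp add: algebra_simps)
    finally show ?thesis
      by (simp add: algebra_simps)
  qed
qed

lemma backward: "a \<le> n \<Longrightarrow> U a (k + s) = U (a + 1) k - U 1 (k - s * int a)"
proof (induction a arbitrary: k)
  case 0
  then show ?case by (simp add: zero)
next
  case (Suc a)
  have "U (Suc a) (k + s) = U a k + U (Suc a + 1) k - U (Suc a) (k - s)"
    using recurrence[of "Suc a" k] Suc.prems by (simp add: algebra_simps)
  also have "U a k = U (Suc a) (k - s) - U 1 (k - s - s * int a)"
    using Suc.IH[of "k - s"] Suc.prems by simp
  finally show ?case
    by (simp add: algebra_simps)
qed

lemma antiperiodic_of_first: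
  assumes first: "\<And>k. U 1 (k + H) = - U 1 k"
  shows "a \<le> n + 1 \<Longrightarrow> U a (k + H) = - U a k"
proof (induction a arbitrary: k)
  case 0
  then show ?case by (simp add: zero)
next
  case (Suc a)
  have "U (Suc a) (k + H) = U a (k - s + H) + U 1 (k - s + s * int (Suc a) + H)"
    using forward[of "Suc a" "k - s + H"] Suc.prems by (simp add: algebra_simps)
  also have "\<dots> = - (U a (k - s) + U 1 (k - s + s * int (Suc a)))"
    using Suc.IH[of "k - s"] Suc.prems first by simp
  also have "\<dots> = - U (Suc a) k"
    using forward[of "Suc a" "k - s"] Suc.prems by simp
  finally show ?case .
qed

text \<open>In types B and C the telescoped node is a single node (g' = g); the two spin nodes of
  type D trade places at every step.\<close>

lemma telescope:
  assumes g: "\<And>k. g (k + 2 * s) = g' k + U 1 (k + c)" and g': "\<And>k. g' (k + 2 * s) = g k + U 1 (k + c)"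
  shows "m \<le> n + 1 \<Longrightarrow>
    g (k + 2 * s * int m) = (if even m then g k else g' k) + U m (k + c + s * (int m - 1))"
proof (induction m arbitrary: k)
  case 0
  then show ?case by (simp add: zero)
next
  case (Suc m)
  have "g (k + 2 * s * int (Suc m)) =
      (if even m then g (k + 2 * s) else g' (k + 2 * s)) + U m (k + c + s * int m + s)"
    using Suc.IH[of "k + 2 * s"] Suc.prems by (simp add: algebra_simps)
  also have "(if even m then g (k + 2 * s) else g' (k + 2 * s)) =
      (if even (Suc m) then g k else g' k) + U 1 (k + c)"
    using g g' by simp
  also have "U m (k + c + s * int m + s) = U (Suc m) (k + c + s * int m) - U 1 (k + c)"
    using backward[of m "k + c + s * int m"] Suc.prems by simp
  finally show ?case
    by simp
qed

lemma reflection: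
  assumes last: "\<And>k. U (n + 1) k = 0"
  shows "a \<le> n + 1 \<Longrightarrow> U a (k + s * int (n + 1)) = - U (n + 1 - a) k"
proof -
  have first_after_last: "U 1 (x + s * int (n + 1)) = - U n x" for x
    using forward[of "n + 1" x] last by (simp add: eq_neg_iff_add_eq_0 add.commute)
  have first_before_last: "U 1 (x - s * int n) = - U n (x + s)" for x
    using backward[of n x] last by simp
  have periodic: "U 1 (x + 2 * s * int (n + 1)) = U 1 x" for x
    using first_after_last[of "x + s * int (n + 1)"] first_before_last[of "x + s * int n"]
    by (simp add: algebra_simps)
  show "a \<le> n + 1 \<Longrightarrow> U a (k + s * int (n + 1)) = - U (n + 1 - a) k"
  proof (induction a arbitrary: k)
    case 0
    then show ?case using last[of k] by (simp add: zero)
  next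
    case (Suc a)
    have "U (Suc a) (k + s * int (n + 1)) = U a (k - s + s * int (n + 1)) + U 1 (k + s * int n + s * int (Suc a))"
      using forward[of "Suc a" "k + s * int n"] Suc.prems by (simp add: algebra_simps)
    also have "U a (k - s + s * int (n + 1)) = - U (n - a + 1) (k - s)"
      using Suc.IH[of "k - s"] Suc.prems by (simp add: Suc_diff_le)
    also have "U (n - a + 1) (k - s) = U (n - a) k + U 1 (k - s - s * int (n - a))"
      using backward[of "n - a" "k - s"] by simp
    also have "U 1 (k - s - s * int (n - a)) = U 1 (k + s * int n + s * int (Suc a))"
      using periodic[of "k - s - s * int (n - a)"] Suc.prems by (simp add: of_nat_diff algebra_simps)
    finally show ?case
      by simp
  qed
qed

end

text \<open>The nodes 1, ..., r - 1 of V, closed off by W at node r: W is 0 for type A, the sum of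
  the two spin nodes for type D, and for types B and C the combination of node r through which
  the double bond enters the relation of node r - 1.\<close>

definition chain_extension :: "(nat \<Rightarrow> int \<Rightarrow> 'g::ab_group_add) \<Rightarrow> nat \<Rightarrow> (int \<Rightarrow> 'g) \<Rightarrow> nat \<Rightarrow> int \<Rightarrow> 'g" where
  "chain_extension V r W a k = (if a = 0 then 0 else if a < r then V a k else W k)"

lemma A_chain_chain_extension:
  assumes rank: "2 \<le> r"
    and rec: "\<And>a k. 1 \<le> a \<Longrightarrow> a \<le> r - 2 \<Longrightarrow> V a (k - s) + V a (k + s) = z0 V (a - 1) k + V (a + 1) k"
    and rec_end: "\<And>k. V (r - 1) (k - s) + V (r - 1) (k + s) = z0 V (r - 2) k + W k"
  shows "A_chain (chain_extension V r W) (r - 1) s"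
proof
  fix a k
  assume a: "1 \<le> a" "a \<le> r - 1"
  have "a - 1 < r"
    using a by linarith
  then have lower: "chain_extension V r W (a - 1) k = z0 V (a - 1) k"
    by (simp add: chain_extension_def z0_def)
  show "chain_extension V r W a (k - s) + chain_extension V r W a (k + s) =
      chain_extension V r W (a - 1) k + chain_extension V r W (a + 1) k"
  proof (cases "a = r - 1")
    case True
    then show ?thesis
      using rec_end[of k] rank lower by (simp add: chain_extension_def numeral_2_eq_2)
  next
    case False
    then have "a \<le> r - 2" "a + 1 < r"
      using a by linarith+
    then show ?thesis
      using rec[of a k] a lower by (simp add: chain_extension_def)
  qed
qed (simp add: chain_extension_def)

section \<open>The classical types\<close>

definition simply_laced_relations :: "dynkin \<Rightarrow> (nat \<Rightarrow> int \<Rightarrow> 'g::ab_group_add) \<Rightarrow> bool" where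
  "simply_laced_relations X V \<longleftrightarrow>
     (\<forall>a\<in>Iset X. \<forall>k. V a (k - 1) + V a (k + 1) = (\<Sum>b\<in>{b\<in>Iset X. adj X a b}. V b k))"

lemma sum_chain_neighbours:
  assumes "1 \<le> a"
  shows "(\<Sum>b\<in>{b\<in>{a - 1, a + 1}. 1 \<le> b}. V b k) = z0 V (a - 1) k + V (a + 1) k"
proof (cases "a = 1")
  case True
  then have "{b\<in>{a - 1, a + 1}. 1 \<le> b} = {a + 1}"
    by auto
  then show ?thesis
    using True by (simp add: z0_def)
next
  case False
  then have "{b\<in>{a - 1, a + 1}. 1 \<le> b} = {a - 1, a + 1}"
    using assms by auto
  then show ?thesis
    using False assms by (simp add: z0_def)
qed

lemma simply_laced_relationsD:
  assumes "simply_laced_relations X V" and "a \<in> Iset X" and "{b\<in>Iset X. adj X a b} = N"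
  shows "V a (k - 1) + V a (k + 1) = (\<Sum>b\<in>N. V b k)"
  using assms by (simp add: simply_laced_relations_def)

locale A_system =
  fixes V :: "nat \<Rightarrow> int \<Rightarrow> 'g::ab_group_add" and r :: nat
  assumes rank: "1 \<le> r"
    and rec: "\<And>a k. 1 \<le> a \<Longrightarrow> a \<le> r - 1 \<Longrightarrow> V a (k - 1) + V a (k + 1) = z0 V (a - 1) k + V (a + 1) k"
    and rec_end: "\<And>k. V r (k - 1) + V r (k + 1) = z0 V (r - 1) k"
begin

abbreviation "U \<equiv> chain_extension V (r + 1) (\<lambda>_. 0)"

sublocale chain: A_chain U r 1
proof -
  have "A_chain U (r + 1 - 1) 1"
    by (rule A_chain_chain_extension) (use rank rec rec_end in auto)
  then show "A_chain U r 1"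
    by simp
qed

lemma antiperiodic: "1 \<le> a \<Longrightarrow> a \<le> r \<Longrightarrow> V a (k + (int r + 1)) = - V (r + 1 - a) k"
  using chain.reflection[of a k] by (simp add: chain_extension_def add.commute)

end

lemma A_system_of_simply_laced:
  assumes rank: "1 \<le> r" and rel: "simply_laced_relations (A r) V"
  shows "A_system V r"
proof
  fix a k
  assume a: "1 \<le> a" "a \<le> r - 1"
  then have "a \<in> Iset (A r)" and "{b\<in>Iset (A r). adj (A r) a b} = {b\<in>{a - 1, a + 1}. 1 \<le> b}"
    by (auto simp: Iset_def adj_def)
  from simply_laced_relationsD[OF rel this] show "V a (k - 1) + V a (k + 1) = z0 V (a - 1) k + V (a + 1) k"
    unfolding sum_chain_neighbours[OF a(1)] .
next
  fix k
  have "r \<in> Iset (A r)" and "{b\<in>Iset (A r). adj (A r) r b} = (if r = 1 then {} else {r - 1})"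
    using rank by (auto simp: Iset_def adj_def)
  from simply_laced_relationsD[OF rel this] show "V r (k - 1) + V r (k + 1) = z0 V (r - 1) k"
    using rank by (simp add: z0_def)
qed (fact rank)

lemma A_twisted_antiperiodic:
  assumes "valid_dynkin (A r)" and "simply_laced_relations (A r) V"
  shows "twisted_antiperiodic V (Iset (A r)) (tnum (A r) * hdual (A r)) (omega (A r))"
proof -
  from assms have "A_system V r"
    by (simp add: A_system_of_simply_laced)
  then show ?thesis
    by (auto simp: twisted_antiperiodic_def Iset_def dest: A_system.antiperiodic)
qed

lemma add_cancel_common:
  fixes x :: "'g::ab_group_add"
  assumes "x + y = z + w" and "u + y = z"
  shows "x = u + w"
  using assms by (metis add.commute add.left_commute add_right_cancel)

locale D_system =
  fixes V :: "nat \<Rightarrow> int \<Rightarrow> 'g::ab_group_add" and n :: nat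
  assumes rank: "2 \<le> n"
    and rec: "\<And>a k. 1 \<le> a \<Longrightarrow> a \<le> n - 1 \<Longrightarrow> V a (k - 1) + V a (k + 1) = z0 V (a - 1) k + V (a + 1) k"
    and rec_fork: "\<And>k. V n (k - 1) + V n (k + 1) = z0 V (n - 1) k + (V (n + 1) k + V (n + 2) k)"
    and rec_spin: "\<And>k. V (n + 1) (k - 1) + V (n + 1) (k + 1) = V n k"
    and rec_spin': "\<And>k. V (n + 2) (k - 1) + V (n + 2) (k + 1) = V n k"
begin

abbreviation "U \<equiv> chain_extension V (n + 1) (\<lambda>k. V (n + 1) k + V (n + 2) k)"

sublocale chain: A_chain U n 1
proof -
  have "A_chain U (n + 1 - 1) 1"
    by (rule A_chain_chain_extension) (use rank rec rec_fork in auto)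
  then show "A_chain U n 1"
    by simp
qed

lemma first_antiperiodic: "U 1 (m + 2 * (int n + 1)) = - U 1 m"
proof -
  define k where "k = m + int n + 1"
  have up: "V (n + 1) (k + 1) + V (n + 2) (k + 1) = V n k + U 1 (m + 2 * (int n + 1))"
    using chain.forward[of "n + 1" k] rank by (simp add: chain_extension_def k_def algebra_simps)
  have down: "V (n + 1) (k - 1) + V (n + 2) (k - 1) = V n k + U 1 m"
    using chain.backward[of n "k - 1"] rank by (simp add: chain_extension_def k_def algebra_simps)
  have "(V (n + 1) (k - 1) + V (n + 2) (k - 1)) + (V (n + 1) (k + 1) + V (n + 2) (k + 1)) = V n k + V n k"
    using rec_spin[of k] rec_spin'[of k] by (simp add: algebra_simps)
  then show ?thesis
    unfolding up down by (simp add: algebra_simps eq_neg_iff_add_eq_0)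
qed

lemma spin_step:
  "V (n + 1) (k + 2 * 1) = V (n + 2) k + U 1 (k + (int n + 2))"
  "V (n + 2) (k + 2 * 1) = V (n + 1) k + U 1 (k + (int n + 2))"
proof -
  have fork: "V (n + 1) (k + 2) + V (n + 2) (k + 2) = V n (k + 1) + U 1 (k + (int n + 2))"
    using chain.forward[of "n + 1" "k + 1"] rank by (simp add: chain_extension_def algebra_simps)
  have spin: "V (n + 1) k + V (n + 1) (k + 2) = V n (k + 1)"
    and spin': "V (n + 2) k + V (n + 2) (k + 2) = V n (k + 1)"
    using rec_spin[of "k + 1"] rec_spin'[of "k + 1"] by (simp_all add: add.commute)
  show "V (n + 1) (k + 2 * 1) = V (n + 2) k + U 1 (k + (int n + 2))"
    using add_cancel_common[OF fork spin'] by simp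
  show "V (n + 2) (k + 2 * 1) = V (n + 1) k + U 1 (k + (int n + 2))"
    using add_cancel_common[OF fork[unfolded add.commute[of "V (n + 1) (k + 2)"]] spin] by simp
qed

lemma spin_antiperiodic:
  assumes "\<And>k. g (k + 2 * 1) = g' k + U 1 (k + (int n + 2))"
    and "\<And>k. g' (k + 2 * 1) = g k + U 1 (k + (int n + 2))"
  shows "g (k + 2 * (int n + 1)) = (if even n then g' k else g k) - (V (n + 1) k + V (n + 2) k)"
proof -
  have "g (k + 2 * 1 * int (n + 1)) =
      (if even (n + 1) then g k else g' k) + U (n + 1) (k + (int n + 2) + 1 * (int (n + 1) - 1))"
    using chain.telescope[OF assms, of "n + 1" k] by simp
  also have "U (n + 1) (k + (int n + 2) + 1 * (int (n + 1) - 1)) = - U (n + 1) k"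
    using chain.antiperiodic_of_first[OF first_antiperiodic, of "n + 1" k] by (simp add: algebra_simps)
  finally show ?thesis
    by (simp add: chain_extension_def algebra_simps)
qed

lemma antiperiodic: "1 \<le> a \<Longrightarrow> a \<le> n + 2 \<Longrightarrow> V a (k + 2 * (int n + 1)) = - V (omega (D (n + 2)) a) k"
proof -
  assume a: "1 \<le> a" "a \<le> n + 2"
  consider "a \<le> n" | "a = n + 1" | "a = n + 2"
    using a by linarith
  then show ?thesis
  proof cases
    case 1
    then show ?thesis
      using chain.antiperiodic_of_first[OF first_antiperiodic, of a k] a by (simp add: chain_extension_def)
  next
    case 2
    then show ?thesis
      using spin_antiperiodic[OF spin_step, of k] by (auto simp: algebra_simps eq_neg_iff_add_eq_0)
  next
    case 3
    then show ?thesis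
      using spin_antiperiodic[OF spin_step(2,1), of k] by (auto simp: algebra_simps eq_neg_iff_add_eq_0)
  qed
qed

end

lemma D_system_of_simply_laced:
  assumes rank: "2 \<le> n" and rel: "simply_laced_relations (D (n + 2)) V"
  shows "D_system V n"
proof
  fix a k
  assume a: "1 \<le> a" "a \<le> n - 1"
  then have "a \<in> Iset (D (n + 2))" and "{b\<in>Iset (D (n + 2)). adj (D (n + 2)) a b} = {b\<in>{a - 1, a + 1}. 1 \<le> b}"
    by (auto simp: Iset_def adj_def)
  from simply_laced_relationsD[OF rel this] show "V a (k - 1) + V a (k + 1) = z0 V (a - 1) k + V (a + 1) k"
    unfolding sum_chain_neighbours[OF a(1)] .
next
  fix k
  have "n \<in> Iset (D (n + 2))" and "{b\<in>Iset (D (n + 2)). adj (D (n + 2)) n b} = {n - 1, n + 1, n + 2}"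
    using rank by (auto simp: Iset_def adj_def)
  moreover have "n - 1 \<notin> {n + 1, n + 2}"
    by auto
  ultimately show "V n (k - 1) + V n (k + 1) = z0 V (n - 1) k + (V (n + 1) k + V (n + 2) k)"
    using rank simply_laced_relationsD[OF rel] by (simp add: z0_def)
next
  fix k
  have "n + 1 \<in> Iset (D (n + 2))" and "{b\<in>Iset (D (n + 2)). adj (D (n + 2)) (n + 1) b} = {n}"
    using rank by (auto simp: Iset_def adj_def)
  from simply_laced_relationsD[OF rel this] show "V (n + 1) (k - 1) + V (n + 1) (k + 1) = V n k"
    by simp
next
  fix k
  have "n + 2 \<in> Iset (D (n + 2))" and "{b\<in>Iset (D (n + 2)). adj (D (n + 2)) (n + 2) b} = {n}"
    using rank by (auto simp: Iset_def adj_def)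
  from simply_laced_relationsD[OF rel this] show "V (n + 2) (k - 1) + V (n + 2) (k + 1) = V n k"
    by simp
qed (fact rank)

lemma D_twisted_antiperiodic:
  assumes "valid_dynkin (D r)" and "simply_laced_relations (D r) V"
  shows "twisted_antiperiodic V (Iset (D r)) (tnum (D r) * hdual (D r)) (omega (D r))"
proof -
  define n where "n = r - 2"
  with assms(1) have r: "r = n + 2" and "2 \<le> n"
    by auto
  with assms(2) have "D_system V n"
    by (simp add: D_system_of_simply_laced)
  then have "twisted_antiperiodic V {1..n + 2} (2 * (int n + 1)) (omega (D (n + 2)))"
    by (auto simp: twisted_antiperiodic_def simp del: omega.simps dest: D_system.antiperiodic)
  with r show ?thesis
    by (simp add: Iset_def algebra_simps)
qed

locale B_T_system =
  fixes T :: "nat \<Rightarrow> int \<Rightarrow> 'g::ab_group_add" and r :: nat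
  assumes rank: "2 \<le> r"
    and rec: "\<And>a k. 1 \<le> a \<Longrightarrow> a \<le> r - 2 \<Longrightarrow> T a (k - 2) + T a (k + 2) = z0 T (a - 1) k + T (a + 1) k"
    and rec_long: "\<And>k. T (r - 1) (k - 2) + T (r - 1) (k + 2) = z0 T (r - 2) k + T r k"
    and rec_short: "\<And>k. T r (k - 1) + T r (k + 1) = T (r - 1) (k - 1) + T (r - 1) (k + 1)"
begin

abbreviation "U \<equiv> chain_extension T r (T r)"

sublocale chain: A_chain U "r - 1" 2
  using rank rec rec_long by (rule A_chain_chain_extension)

lemma U_eq: "1 \<le> a \<Longrightarrow> a \<le> r \<Longrightarrow> U a k = T a k"
  by (simp add: chain_extension_def)

lemma first_antiperiodic: "U 1 (m + 2 * (2 * int r - 1)) = - U 1 m"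
proof -
  define k where "k = m + 2 * int r - 1"
  have up: "T r (k + 1) = T (r - 1) (k - 1) + U 1 (m + 2 * (2 * int r - 1))"
    using chain.forward[of r "k - 1"] rank by (simp add: U_eq k_def algebra_simps)
  have down: "T (r - 1) (k + 1) = T r (k - 1) - U 1 m"
    using chain.backward[of "r - 1" "k - 1"] rank by (simp add: U_eq k_def of_nat_diff algebra_simps)
  show ?thesis
    using rec_short[of k] unfolding up down by (simp add: algebra_simps eq_neg_iff_add_eq_0)
qed

lemma antiperiodic: "1 \<le> a \<Longrightarrow> a \<le> r \<Longrightarrow> T a (k + 2 * (2 * int r - 1)) = - T a k"
  using chain.antiperiodic_of_first[OF first_antiperiodic, of a k] rank by (simp add: U_eq)

end

lemma B_T_twisted_antiperiodic:
  assumes "valid_dynkin (B r)" and "T_sys (B r) T"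
  shows "twisted_antiperiodic T (Iset (B r)) (tnum (B r) * hdual (B r)) (omega (B r))"
proof -
  from assms have "B_T_system T r"
    by (auto simp: B_T_system_def T_sys_def)
  then show ?thesis
    by (auto simp: twisted_antiperiodic_def Iset_def dest: B_T_system.antiperiodic)
qed

locale B_Y_system =
  fixes Y :: "nat \<Rightarrow> int \<Rightarrow> 'g::ab_group_add" and r :: nat
  assumes rank: "2 \<le> r"
    and rec: "\<And>a k. 1 \<le> a \<Longrightarrow> a \<le> r - 2 \<Longrightarrow> Y a (k - 2) + Y a (k + 2) = z0 Y (a - 1) k + Y (a + 1) k"
    and rec_long: "\<And>k. Y (r - 1) (k - 2) + Y (r - 1) (k + 2) = z0 Y (r - 2) k + Y r (k - 1) + Y r (k + 1)"
    and rec_short: "\<And>k. Y r (k - 1) + Y r (k + 1) = Y (r - 1) k"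
begin

abbreviation "U \<equiv> chain_extension Y r (\<lambda>k. Y r (k - 1) + Y r (k + 1))"

sublocale chain: A_chain U "r - 1" 2
  by (rule A_chain_chain_extension) (use rank rec rec_long in \<open>simp_all add: add.assoc\<close>)

lemma U_eq: "1 \<le> a \<Longrightarrow> a < r \<Longrightarrow> U a k = Y a k"
  by (simp add: chain_extension_def)

lemma U_last: "U r k = Y (r - 1) k"
  using rank rec_short[of k] by (simp add: chain_extension_def)

lemma first_antiperiodic: "U 1 (m + 2 * (2 * int r - 1)) = - U 1 m"
proof -
  define k where "k = m + 2 * int r - 2"
  have up: "Y (r - 1) (k + 2) = Y (r - 1) k + U 1 (m + 2 * (2 * int r - 1))"
    using chain.forward[of r k] rank by (simp add: U_eq U_last k_def algebra_simps)
  have down: "Y (r - 1) (k + 2) = Y (r - 1) k - U 1 m"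
    using chain.backward[of "r - 1" k] rank by (simp add: U_eq U_last k_def of_nat_diff algebra_simps)
  show ?thesis
    using up unfolding down by (simp add: eq_neg_iff_add_eq_0)
qed

lemma short_root_step: "Y r (k + 4) = Y r k + U 1 (k + 2 * int r + 1)"
proof -
  have "Y r (k + 2) + Y r (k + 4) = (Y r k + Y r (k + 2)) + U 1 (k + 2 * int r + 1)"
    using chain.forward[of r "k + 1"] rec_short[of "k + 1"] rec_short[of "k + 3"] rank
    by (simp add: U_eq U_last algebra_simps)
  then show ?thesis
    by (simp add: algebra_simps)
qed

lemma antiperiodic: "1 \<le> a \<Longrightarrow> a \<le> r \<Longrightarrow> Y a (k + 2 * (2 * int r - 1)) = - Y a k"
proof (cases "a = r")
  case True
  have step: "Y r (x + 2 * 2) = Y r x + U 1 (x + (2 * int r + 1))" for x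
    using short_root_step[of x] by (simp add: add.assoc)
  have "Y r (k + 2 + 2 * 2 * int (r - 1)) =
      Y r (k + 2) + U (r - 1) (k + 2 + (2 * int r + 1) + 2 * (int (r - 1) - 1))"
    using chain.telescope[OF step step, of "r - 1" "k + 2"] by simp
  also have "U (r - 1) (k + 2 + (2 * int r + 1) + 2 * (int (r - 1) - 1)) = - Y (r - 1) (k + 1)"
    using chain.antiperiodic_of_first[OF first_antiperiodic, of "r - 1" "k + 1"] rank
    by (simp add: U_eq of_nat_diff algebra_simps)
  also have "Y (r - 1) (k + 1) = Y r k + Y r (k + 2)"
    using rec_short[of "k + 1"] by (simp add: add.commute)
  finally have "Y r (k + 2 + 2 * 2 * int (r - 1)) = - Y r k"
    by (simp add: algebra_simps)
  moreover have "k + 2 + 2 * 2 * int (r - 1) = k + 2 * (2 * int r - 1)"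
    using rank by (simp add: of_nat_diff)
  ultimately show ?thesis
    using True by metis
next
  case False
  moreover assume "1 \<le> a" "a \<le> r"
  ultimately show ?thesis
    using chain.antiperiodic_of_first[OF first_antiperiodic, of a k] by (simp add: U_eq)
qed

end

lemma B_Y_twisted_antiperiodic:
  assumes "valid_dynkin (B r)" and "Y_sys (B r) Y"
  shows "twisted_antiperiodic Y (Iset (B r)) (tnum (B r) * hdual (B r)) (omega (B r))"
proof -
  from assms have "B_Y_system Y r"
    by (auto simp: B_Y_system_def Y_sys_def)
  then show ?thesis
    by (auto simp: twisted_antiperiodic_def Iset_def dest: B_Y_system.antiperiodic)
qed

locale C_T_system =
  fixes T :: "nat \<Rightarrow> int \<Rightarrow> 'g::ab_group_add" and r :: nat
  assumes rank: "2 \<le> r"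
    and rec: "\<And>a k. 1 \<le> a \<Longrightarrow> a \<le> r - 2 \<Longrightarrow> T a (k - 1) + T a (k + 1) = z0 T (a - 1) k + T (a + 1) k"
    and rec_short: "\<And>k. T (r - 1) (k - 1) + T (r - 1) (k + 1) = z0 T (r - 2) k + T r (k - 1) + T r (k + 1)"
    and rec_long: "\<And>k. T r (k - 2) + T r (k + 2) = T (r - 1) k"
begin

abbreviation "U \<equiv> chain_extension T r (\<lambda>k. T r (k - 1) + T r (k + 1))"

sublocale chain: A_chain U "r - 1" 1
  by (rule A_chain_chain_extension) (use rank rec rec_short in \<open>simp_all add: add.assoc\<close>)

lemma U_eq: "1 \<le> a \<Longrightarrow> a < r \<Longrightarrow> U a k = T a k"
  by (simp add: chain_extension_def)

lemma U_last: "U r k = T r (k - 1) + T r (k + 1)"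
  using rank by (simp add: chain_extension_def)

lemma long_root_step: "T r (k + 2) = T r k + U 1 (k + int r + 2)"
proof -
  have "T r (k + 2) + T r (k + 4) = (T r k + T r (k + 4)) + U 1 (k + int r + 2)"
    using chain.forward[of r "k + 2"] rec_long[of "k + 2"] rank by (simp add: U_eq U_last algebra_simps)
  then show ?thesis
    by (simp add: algebra_simps)
qed

lemma first_antiperiodic: "U 1 (m + 2 * (int r + 1)) = - U 1 m"
proof -
  define k where "k = m + int r - 1"
  have down: "T (r - 1) (k + 1) = T r (k - 1) + T r (k + 1) - U 1 m"
    using chain.backward[of "r - 1" k] rank by (simp add: U_eq U_last k_def of_nat_diff algebra_simps)
  have "T r (k + 3) = T r (k + 1) + U 1 (m + 2 * (int r + 1))"
    using long_root_step[of "k + 1"] by (simp add: k_def algebra_simps)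
  then show ?thesis
    using rec_long[of "k + 1"] unfolding down by (simp add: algebra_simps eq_neg_iff_add_eq_0)
qed

lemma antiperiodic: "1 \<le> a \<Longrightarrow> a \<le> r \<Longrightarrow> T a (k + 2 * (int r + 1)) = - T a k"
proof (cases "a = r")
  case True
  have step: "T r (x + 2 * 1) = T r x + U 1 (x + (int r + 2))" for x
    using long_root_step[of x] by (simp add: add.assoc)
  have "T r (k + 2 * int r) = T r k + U r (k - 1 + 2 * (int r + 1))"
    using chain.telescope[OF step step, of r k] rank by (simp add: algebra_simps)
  also have "U r (k - 1 + 2 * (int r + 1)) = - (T r (k - 2) + T r k)"
    using chain.antiperiodic_of_first[OF first_antiperiodic, of r "k - 1"] rank by (simp add: U_last)
  finally have "T r (k + 2 * int r) = - T r (k - 2)"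
    by simp
  moreover have "U 1 (k + int r + 2 * (int r + 1)) = - U 1 (k - 2 + int r + 2)"
    using first_antiperiodic[of "k + int r"] by simp
  ultimately show ?thesis
    using True long_root_step[of "k + 2 * int r"] long_root_step[of "k - 2"] by (simp add: algebra_simps)
next
  case False
  moreover assume "1 \<le> a" "a \<le> r"
  ultimately show ?thesis
    using chain.antiperiodic_of_first[OF first_antiperiodic, of a k] by (simp add: U_eq)
qed

end

lemma C_T_twisted_antiperiodic:
  assumes "valid_dynkin (C r)" and "T_sys (C r) T"
  shows "twisted_antiperiodic T (Iset (C r)) (tnum (C r) * hdual (C r)) (omega (C r))"
proof -
  from assms have "C_T_system T r"
    by (auto simp: C_T_system_def T_sys_def)
  then show ?thesis
    by (auto simp: twisted_antiperiodic_def Iset_def dest: C_T_system.antiperiodic)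
qed

locale C_Y_system =
  fixes Y :: "nat \<Rightarrow> int \<Rightarrow> 'g::ab_group_add" and r :: nat
  assumes rank: "2 \<le> r"
    and rec: "\<And>a k. 1 \<le> a \<Longrightarrow> a \<le> r - 2 \<Longrightarrow> Y a (k - 1) + Y a (k + 1) = z0 Y (a - 1) k + Y (a + 1) k"
    and rec_short: "\<And>k. Y (r - 1) (k - 1) + Y (r - 1) (k + 1) = z0 Y (r - 2) k + Y r k"
    and rec_long: "\<And>k. Y r (k - 2) + Y r (k + 2) = Y (r - 1) (k - 1) + Y (r - 1) (k + 1)"
begin

abbreviation "U \<equiv> chain_extension Y r (Y r)"

sublocale chain: A_chain U "r - 1" 1
  using rank rec rec_short by (rule A_chain_chain_extension)

lemma U_eq: "1 \<le> a \<Longrightarrow> a \<le> r \<Longrightarrow> U a k = Y a k"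
  by (simp add: chain_extension_def)

lemma first_antiperiodic: "U 1 (m + 2 * (int r + 1)) = - U 1 m"
proof -
  define k where "k = m + int r + 1"
  have up: "Y r (k + 2) = Y (r - 1) (k + 1) + U 1 (m + 2 * (int r + 1))"
    using chain.forward[of r "k + 1"] rank by (simp add: U_eq k_def algebra_simps)
  have down: "Y (r - 1) (k - 1) = Y r (k - 2) - U 1 m"
    using chain.backward[of "r - 1" "k - 2"] rank by (simp add: U_eq k_def of_nat_diff algebra_simps)
  show ?thesis
    using rec_long[of k] unfolding up down by (simp add: algebra_simps eq_neg_iff_add_eq_0)
qed

lemma antiperiodic: "1 \<le> a \<Longrightarrow> a \<le> r \<Longrightarrow> Y a (k + 2 * (int r + 1)) = - Y a k"
  using chain.antiperiodic_of_first[OF first_antiperiodic, of a k] rank by (simp add: U_eq)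

end

lemma C_Y_twisted_antiperiodic:
  assumes "valid_dynkin (C r)" and "Y_sys (C r) Y"
  shows "twisted_antiperiodic Y (Iset (C r)) (tnum (C r) * hdual (C r)) (omega (C r))"
proof -
  from assms have "C_Y_system Y r"
    by (auto simp: C_Y_system_def Y_sys_def)
  then show ?thesis
    by (auto simp: twisted_antiperiodic_def Iset_def dest: C_Y_system.antiperiodic)
qed

section \<open>Linear consequences certified by cancellation\<close>

text \<open>An atom (a, d) stands for V a (k + d); an equation is a pair of atom lists whose sums agree
  for every k, and a recurrence (a, s, rhs) is the equation V a (k - s) + V a (k + s) = \<Sum>rhs.\<close>

type_synonym atom = "nat \<times> int"
type_synonym equation = "atom list \<times> atom list"
type_synonym recurrence = "nat \<times> int \<times> atom list"

definition atoms_sum :: "(nat \<Rightarrow> int \<Rightarrow> 'g::ab_group_add) \<Rightarrow> int \<Rightarrow> atom list \<Rightarrow> 'g" where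
  "atoms_sum V k xs = (\<Sum>(a, d)\<leftarrow>xs. V a (k + d))"

definition eq_holds :: "(nat \<Rightarrow> int \<Rightarrow> 'g::ab_group_add) \<Rightarrow> equation \<Rightarrow> bool" where
  "eq_holds V e \<longleftrightarrow> (\<forall>k. atoms_sum V k (fst e) = atoms_sum V k (snd e))"

definition shift_atoms :: "int \<Rightarrow> atom list \<Rightarrow> atom list" where
  "shift_atoms m xs = map (\<lambda>(a, d). (a, d + m)) xs"

definition shift_eq :: "int \<Rightarrow> equation \<Rightarrow> equation" where
  "shift_eq m e = (shift_atoms m (fst e), shift_atoms m (snd e))"

definition combination :: "equation list \<Rightarrow> equation list \<Rightarrow> equation" where
  "combination ps ns =
     (concat (map fst ps) @ concat (map snd ns), concat (map snd ps) @ concat (map fst ns))"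

definition cancels_to :: "equation \<Rightarrow> equation \<Rightarrow> bool" where
  "cancels_to c e \<longleftrightarrow> mset (fst e @ fst c) = mset (snd e @ snd c)"

lemma atoms_sum_append [simp]: "atoms_sum V k (xs @ ys) = atoms_sum V k xs + atoms_sum V k ys"
  by (simp add: atoms_sum_def)

lemma atoms_sum_shift_atoms: "atoms_sum V k (shift_atoms m xs) = atoms_sum V (k + m) xs"
  by (induction xs) (auto simp: atoms_sum_def shift_atoms_def algebra_simps)

lemma atoms_sum_mset_eq:
  assumes "mset xs = mset ys"
  shows "atoms_sum V k xs = atoms_sum V k ys"
proof -
  have "atoms_sum V k zs = sum_mset (image_mset (\<lambda>(a, d). V a (k + d)) (mset zs))" for zs
    by (simp add: atoms_sum_def sum_mset_sum_list flip: mset_map)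
  then show ?thesis
    using assms by simp
qed

lemma eq_holds_shift_eq: "eq_holds V e \<Longrightarrow> eq_holds V (shift_eq m e)"
  by (simp add: eq_holds_def shift_eq_def atoms_sum_shift_atoms)

lemma atoms_sum_concat: "atoms_sum V k (concat xss) = (\<Sum>xs\<leftarrow>xss. atoms_sum V k xs)"
  by (induction xss) (simp_all add: atoms_sum_def)

lemma eq_holds_combination:
  assumes "\<forall>e\<in>set ps. eq_holds V e" and "\<forall>e\<in>set ns. eq_holds V e"
  shows "eq_holds V (combination ps ns)"
proof -
  have sides: "(\<Sum>e\<leftarrow>es. atoms_sum V k (fst e)) = (\<Sum>e\<leftarrow>es. atoms_sum V k (snd e))"
    if "\<forall>e\<in>set es. eq_holds V e" for es k
    using that by (induction es) (simp_all add: eq_holds_def)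
  show ?thesis
    unfolding eq_holds_def combination_def
    by (simp add: atoms_sum_concat o_def sides[OF assms(1)] sides[OF assms(2)])
qed

lemma eq_holds_cancels_to:
  assumes "eq_holds V c" and "cancels_to c e"
  shows "eq_holds V e"
  unfolding eq_holds_def
proof
  fix k
  have "atoms_sum V k (fst e) + atoms_sum V k (fst c) = atoms_sum V k (snd e) + atoms_sum V k (snd c)"
    using atoms_sum_mset_eq[OF assms(2)[unfolded cancels_to_def]] by simp
  then show "atoms_sum V k (fst e) = atoms_sum V k (snd e)"
    using assms(1) by (simp add: eq_holds_def)
qed

definition recurrence_eq :: "recurrence \<Rightarrow> equation" where
  "recurrence_eq r = (case r of (a, s, rhs) \<Rightarrow> ([(a, - s), (a, s)], rhs))"

definition satisfies_recurrences :: "(nat \<Rightarrow> int \<Rightarrow> 'g::ab_group_add) \<Rightarrow> recurrence list \<Rightarrow> bool" where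
  "satisfies_recurrences V rs \<longleftrightarrow> (\<forall>r\<in>set rs. eq_holds V (recurrence_eq r))"

definition antiperiod_eq :: "int \<Rightarrow> (nat \<Rightarrow> nat) \<Rightarrow> nat \<Rightarrow> equation" where
  "antiperiod_eq H \<omega> b = ([(b, H), (\<omega> b, 0)], [])"

text \<open>Rec a m is the recurrence of node a shifted by m; Anti b m is the antiperiodicity of an
  already treated node b, shifted by m. A certificate step (b, ps, ns) derives antiperiodicity
  at node b: its equation plus the equations ps minus the equations ns cancels formally.\<close>

datatype eq_ref = Rec nat int | Anti nat int

fun ref_eq :: "recurrence list \<Rightarrow> int \<Rightarrow> (nat \<Rightarrow> nat) \<Rightarrow> eq_ref \<Rightarrow> equation" where
  "ref_eq rs H \<omega> (Rec a m) =
     (case map_of rs a of Some (s, rhs) \<Rightarrow> shift_eq m (recurrence_eq (a, s, rhs)) | None \<Rightarrow> ([], []))"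
| "ref_eq rs H \<omega> (Anti b m) = shift_eq m (antiperiod_eq H \<omega> b)"

fun ref_known :: "nat list \<Rightarrow> eq_ref \<Rightarrow> bool" where
  "ref_known known (Rec a m) = True"
| "ref_known known (Anti b m) = (b \<in> set known)"

type_synonym antiperiod_certificate = "(nat \<times> eq_ref list \<times> eq_ref list) list"

fun antiperiod_cert_ok ::
  "recurrence list \<Rightarrow> int \<Rightarrow> (nat \<Rightarrow> nat) \<Rightarrow> nat list \<Rightarrow> antiperiod_certificate \<Rightarrow> bool"
where
  "antiperiod_cert_ok rs H \<omega> known [] = True"
| "antiperiod_cert_ok rs H \<omega> known ((b, ps, ns) # steps) \<longleftrightarrow>
     list_all (ref_known known) (ps @ ns)
   \<and> cancels_to (combination (map (ref_eq rs H \<omega>) ps) (map (ref_eq rs H \<omega>) ns))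
       (antiperiod_eq H \<omega> b)
   \<and> antiperiod_cert_ok rs H \<omega> (b # known) steps"

lemma eq_holds_ref_eq:
  assumes "satisfies_recurrences V rs" and "\<forall>c\<in>set known. eq_holds V (antiperiod_eq H \<omega> c)"
    and "ref_known known r"
  shows "eq_holds V (ref_eq rs H \<omega> r)"
proof (cases r)
  case (Rec a m)
  show ?thesis
  proof (cases "map_of rs a")
    case None
    then show ?thesis using Rec by (simp add: eq_holds_def)
  next
    case (Some srhs)
    then have "(a, srhs) \<in> set rs" by (rule map_of_SomeD)
    then show ?thesis
      using Rec Some assms(1) by (auto simp: satisfies_recurrences_def intro: eq_holds_shift_eq)
  qed
next
  case (Anti b m)
  then show ?thesis using assms(2,3) by (simp add: eq_holds_shift_eq)
qed

lemma antiperiod_cert_ok_sound: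
  assumes "satisfies_recurrences V rs"
  shows "\<forall>c\<in>set known. eq_holds V (antiperiod_eq H \<omega> c) \<Longrightarrow> antiperiod_cert_ok rs H \<omega> known steps
    \<Longrightarrow> b \<in> fst ` set steps \<Longrightarrow> eq_holds V (antiperiod_eq H \<omega> b)"
proof (induction steps arbitrary: known)
  case Nil
  then show ?case by simp
next
  case (Cons step steps)
  obtain c ps ns where step: "step = (c, ps, ns)"
    by (cases step) auto
  let ?comb = "combination (map (ref_eq rs H \<omega>) ps) (map (ref_eq rs H \<omega>) ns)"
  have "\<forall>r\<in>set (ps @ ns). eq_holds V (ref_eq rs H \<omega> r)"
    using Cons.prems step by (simp add: list_all_iff eq_holds_ref_eq[OF assms Cons.prems(1)])
  then have "eq_holds V ?comb"
    by (intro eq_holds_combination) auto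
  moreover have "cancels_to ?comb (antiperiod_eq H \<omega> c)"
    using Cons.prems step by simp
  ultimately have c: "eq_holds V (antiperiod_eq H \<omega> c)"
    by (rule eq_holds_cancels_to)
  show ?case
  proof (cases "b = c")
    case True
    with c show ?thesis by simp
  next
    case False
    then show ?thesis
      using Cons.IH[of "c # known"] Cons.prems step c by auto
  qed
qed

lemma eq_holds_antiperiod_eq: "eq_holds V (antiperiod_eq H \<omega> b) \<longleftrightarrow> (\<forall>k. V b (k + H) = - V (\<omega> b) k)"
  by (simp add: eq_holds_def antiperiod_eq_def atoms_sum_def eq_neg_iff_add_eq_0)

lemma twisted_antiperiodic_by_certificate:
  assumes "satisfies_recurrences V rs" and "antiperiod_cert_ok rs H \<omega> [] cert" and "I \<subseteq> fst ` set cert"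
  shows "twisted_antiperiodic V I H \<omega>"
proof -
  have "eq_holds V (antiperiod_eq H \<omega> a)" if "a \<in> I" for a
    using antiperiod_cert_ok_sound[OF assms(1) _ assms(2)] subsetD[OF assms(3) that] by simp
  then show ?thesis
    by (simp add: twisted_antiperiodic_def eq_holds_antiperiod_eq)
qed

section \<open>The exceptional types\<close>

definition sl_recurrences :: "dynkin \<Rightarrow> recurrence list" where
  "sl_recurrences X =
     map (\<lambda>a. (a, 1, map (\<lambda>b. (b, 0)) (filter (adj X a) [1..<Suc (rank X)]))) [1..<Suc (rank X)]"

lemma satisfies_sl_recurrences:
  assumes "simply_laced_relations X V"
  shows "satisfies_recurrences V (sl_recurrences X)"
  unfolding satisfies_recurrences_def
proof
  fix rc
  assume "rc \<in> set (sl_recurrences X)"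
  then obtain a where a: "a \<in> Iset X"
    and rc: "rc = (a, 1, map (\<lambda>b. (b, 0)) (filter (adj X a) [1..<Suc (rank X)]))"
    by (auto simp: sl_recurrences_def Iset_def)
  have "{b\<in>Iset X. adj X a b} = set (filter (adj X a) [1..<Suc (rank X)])"
    by (auto simp: Iset_def)
  from simply_laced_relationsD[OF assms a this]
  show "eq_holds V (recurrence_eq rc)"
    by (simp add: rc eq_holds_def recurrence_eq_def atoms_sum_def sum_list_distinct_conv_sum_set o_def)
qed

lemma sl_recurrences_E6:
  "sl_recurrences E6 =
    [(1, 1, [(2, 0)]), (2, 1, [(1, 0), (3, 0)]), (3, 1, [(2, 0), (4, 0), (5, 0)]),
     (4, 1, [(3, 0)]), (5, 1, [(3, 0), (6, 0)]), (6, 1, [(5, 0)])]"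
  by (simp add: sl_recurrences_def adj_def upt_conv_Cons)

lemma sl_recurrences_E7:
  "sl_recurrences E7 =
    [(1, 1, [(2, 0)]), (2, 1, [(1, 0), (3, 0)]), (3, 1, [(2, 0), (4, 0), (7, 0)]),
     (4, 1, [(3, 0), (5, 0)]), (5, 1, [(4, 0), (6, 0)]), (6, 1, [(5, 0)]), (7, 1, [(3, 0)])]"
  by (simp add: sl_recurrences_def adj_def upt_conv_Cons)

lemma sl_recurrences_E8:
  "sl_recurrences E8 =
    [(1, 1, [(2, 0)]), (2, 1, [(1, 0), (3, 0)]), (3, 1, [(2, 0), (4, 0)]), (4, 1, [(3, 0), (5, 0)]),
     (5, 1, [(4, 0), (6, 0), (8, 0)]), (6, 1, [(5, 0), (7, 0)]), (7, 1, [(6, 0)]), (8, 1, [(5, 0)])]"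
  by (simp add: sl_recurrences_def adj_def upt_conv_Cons)

definition F4_T_recurrences :: "recurrence list" where
  "F4_T_recurrences =
    [(1, 2, [(2, 0)]), (2, 2, [(1, 0), (3, 0)]), (3, 1, [(2, -1), (2, 1), (4, 0)]), (4, 1, [(3, 0)])]"

definition F4_Y_recurrences :: "recurrence list" where
  "F4_Y_recurrences =
    [(1, 2, [(2, 0)]), (2, 2, [(1, 0), (3, -1), (3, 1)]), (3, 1, [(2, 0), (4, 0)]), (4, 1, [(3, 0)])]"

definition G2_T_recurrences :: "recurrence list" where
  "G2_T_recurrences = [(1, 3, [(2, 0)]), (2, 1, [(1, -2), (1, 0), (1, 2)])]"

definition G2_Y_recurrences :: "recurrence list" where
  "G2_Y_recurrences = [(1, 3, [(2, -2), (2, 0), (2, 2)]), (2, 1, [(1, 0)])]"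

lemma satisfies_F4_T_recurrences: "T_sys F4 T \<Longrightarrow> satisfies_recurrences T F4_T_recurrences"
  by (simp add: T_sys_def F4_T_recurrences_def satisfies_recurrences_def recurrence_eq_def
      eq_holds_def atoms_sum_def add.assoc)

lemma satisfies_F4_Y_recurrences: "Y_sys F4 Y \<Longrightarrow> satisfies_recurrences Y F4_Y_recurrences"
  by (simp add: Y_sys_def F4_Y_recurrences_def satisfies_recurrences_def recurrence_eq_def
      eq_holds_def atoms_sum_def add.assoc)

lemma satisfies_G2_T_recurrences: "T_sys G2 T \<Longrightarrow> satisfies_recurrences T G2_T_recurrences"
  by (simp add: T_sys_def G2_T_recurrences_def satisfies_recurrences_def recurrence_eq_def
      eq_holds_def atoms_sum_def add.assoc)

lemma satisfies_G2_Y_recurrences: "Y_sys G2 Y \<Longrightarrow> satisfies_recurrences Y G2_Y_recurrences"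
  by (simp add: Y_sys_def G2_Y_recurrences_def satisfies_recurrences_def recurrence_eq_def
      eq_holds_def atoms_sum_def add.assoc)

text \<open>The integer combinations below were found by solving linear systems outside the
  prover; only their formal cancellation is checked here.\<close>

definition E6_certificate :: "antiperiod_certificate" where
  "E6_certificate =
    [(1,
       [],
       [Rec 1 5, Rec 1 11, Rec 2 4, Rec 2 6, Rec 2 10, Rec 3 3, Rec 3 5, Rec 3 7,
        Rec 3 9, Rec 4 4, Rec 4 8, Rec 5 2, Rec 5 6, Rec 5 8, Rec 6 1, Rec 6 7]),
    (6,
       [],
       [Rec 1 1, Rec 1 7, Rec 2 2, Rec 2 6, Rec 2 8, Rec 3 3, Rec 3 5, Rec 3 7,
        Rec 3 9, Rec 4 4, Rec 4 8, Rec 5 4, Rec 5 6, Rec 5 10, Rec 6 5, Rec 6 11]),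
    (2, [Rec 1 12, Rec 6 0], [Anti 1 (-1), Anti 1 1]),
    (5, [Rec 1 0, Rec 6 12], [Anti 6 (-1), Anti 6 1]),
    (3, [Rec 2 12, Rec 5 0, Anti 1 0], [Anti 2 (-1), Anti 2 1]),
    (4, [Rec 3 0, Rec 3 12, Anti 2 0, Anti 5 0], [Anti 3 (-1), Anti 3 1])]"

definition E7_certificate :: "antiperiod_certificate" where
  "E7_certificate =
    [(1,
       [],
       [Rec 1 1, Rec 1 7, Rec 1 11, Rec 1 17, Rec 2 2, Rec 2 6, Rec 2 8, Rec 2 10,
        Rec 2 12, Rec 2 16, Rec 3 3, Rec 3 5, Rec 3 7, Rec 3 9, Rec 3 9, Rec 3 11,
        Rec 3 13, Rec 3 15, Rec 4 4, Rec 4 6, Rec 4 8, Rec 4 10, Rec 4 12, Rec 4 14,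
        Rec 5 5, Rec 5 7, Rec 5 11, Rec 5 13, Rec 6 6, Rec 6 12, Rec 7 4, Rec 7 8,
        Rec 7 10, Rec 7 14]),
    (6,
       [],
       [Rec 1 6, Rec 1 12, Rec 2 5, Rec 2 7, Rec 2 11, Rec 2 13, Rec 3 4, Rec 3 6,
        Rec 3 8, Rec 3 10, Rec 3 12, Rec 3 14, Rec 4 3, Rec 4 7, Rec 4 9, Rec 4 11,
        Rec 4 15, Rec 5 2, Rec 5 8, Rec 5 10, Rec 5 16, Rec 6 1, Rec 6 9, Rec 6 17,
        Rec 7 5, Rec 7 9, Rec 7 13]),
    (2, [Rec 1 0, Rec 1 18], [Anti 1 (-1), Anti 1 1]),
    (3, [Rec 2 0, Rec 2 18, Anti 1 0], [Anti 2 (-1), Anti 2 1]),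
    (5, [Rec 6 0, Rec 6 18], [Anti 6 (-1), Anti 6 1]),
    (4, [Rec 5 0, Rec 5 18, Anti 6 0], [Anti 5 (-1), Anti 5 1]),
    (7, [Rec 3 0, Rec 3 18, Anti 2 0, Anti 4 0], [Anti 3 (-1), Anti 3 1])]"

definition E8_certificate :: "antiperiod_certificate" where
  "E8_certificate =
    [(1,
       [],
       [Rec 1 1, Rec 1 11, Rec 1 19, Rec 1 29, Rec 2 2, Rec 2 10, Rec 2 12, Rec 2 18,
        Rec 2 20, Rec 2 28, Rec 3 3, Rec 3 9, Rec 3 11, Rec 3 13, Rec 3 17, Rec 3 19,
        Rec 3 21, Rec 3 27, Rec 4 4, Rec 4 8, Rec 4 10, Rec 4 12, Rec 4 14, Rec 4 16,
        Rec 4 18, Rec 4 20, Rec 4 22, Rec 4 26, Rec 5 5, Rec 5 7, Rec 5 9, Rec 5 11,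
        Rec 5 13, Rec 5 15, Rec 5 15, Rec 5 17, Rec 5 19, Rec 5 21, Rec 5 23, Rec 5 25,
        Rec 6 6, Rec 6 8, Rec 6 12, Rec 6 14, Rec 6 16, Rec 6 18, Rec 6 22, Rec 6 24,
        Rec 7 7, Rec 7 13, Rec 7 17, Rec 7 23, Rec 8 6, Rec 8 10, Rec 8 14, Rec 8 16,
        Rec 8 20, Rec 8 24]),
    (7,
       [],
       [Rec 1 7, Rec 1 13, Rec 1 17, Rec 1 23, Rec 2 6, Rec 2 8, Rec 2 12, Rec 2 14,
        Rec 2 16, Rec 2 18, Rec 2 22, Rec 2 24, Rec 3 5, Rec 3 7, Rec 3 9, Rec 3 11,
        Rec 3 13, Rec 3 15, Rec 3 15, Rec 3 17, Rec 3 19, Rec 3 21, Rec 3 23, Rec 3 25,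
        Rec 4 4, Rec 4 6, Rec 4 8, Rec 4 10, Rec 4 10, Rec 4 12, Rec 4 14, Rec 4 14,
        Rec 4 16, Rec 4 16, Rec 4 18, Rec 4 20, Rec 4 20, Rec 4 22, Rec 4 24, Rec 4 26,
        Rec 5 3, Rec 5 5, Rec 5 7, Rec 5 9, Rec 5 9, Rec 5 11, Rec 5 11, Rec 5 13,
        Rec 5 13, Rec 5 15, Rec 5 15, Rec 5 17, Rec 5 17, Rec 5 19, Rec 5 19, Rec 5 21,
        Rec 5 21, Rec 5 23, Rec 5 25, Rec 5 27, Rec 6 2, Rec 6 6, Rec 6 8, Rec 6 10,
        Rec 6 12, Rec 6 12, Rec 6 14, Rec 6 16, Rec 6 18, Rec 6 18, Rec 6 20, Rec 6 22,
        Rec 6 24, Rec 6 28, Rec 7 1, Rec 7 7, Rec 7 11, Rec 7 13, Rec 7 17, Rec 7 19,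
        Rec 7 23, Rec 7 29, Rec 8 4, Rec 8 8, Rec 8 10, Rec 8 12, Rec 8 14, Rec 8 16,
        Rec 8 18, Rec 8 20, Rec 8 22, Rec 8 26]),
    (2, [Rec 1 0, Rec 1 30], [Anti 1 (-1), Anti 1 1]),
    (3, [Rec 2 0, Rec 2 30, Anti 1 0], [Anti 2 (-1), Anti 2 1]),
    (4, [Rec 3 0, Rec 3 30, Anti 2 0], [Anti 3 (-1), Anti 3 1]),
    (5, [Rec 4 0, Rec 4 30, Anti 3 0], [Anti 4 (-1), Anti 4 1]),
    (6, [Rec 7 0, Rec 7 30], [Anti 7 (-1), Anti 7 1]),
    (8, [Rec 5 0, Rec 5 30, Anti 4 0, Anti 6 0], [Anti 5 (-1), Anti 5 1])]"

definition F4_T_certificate :: "antiperiod_certificate" where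
  "F4_T_certificate =
    [(1,
       [],
       [Rec 1 2, Rec 1 8, Rec 1 10, Rec 1 16, Rec 2 4, Rec 2 6, Rec 2 8, Rec 2 10,
        Rec 2 12, Rec 2 14, Rec 3 5, Rec 3 7, Rec 3 11, Rec 3 13, Rec 4 6, Rec 4 12]),
    (2, [Rec 1 0, Rec 1 18], [Anti 1 (-2), Anti 1 2]),
    (3, [Rec 2 0, Rec 2 18, Anti 1 0], [Anti 2 (-2), Anti 2 2]),
    (4, [Rec 3 0, Rec 3 18, Anti 2 (-1), Anti 2 1], [Anti 3 (-1), Anti 3 1])]"

definition F4_Y_certificate :: "antiperiod_certificate" where
  "F4_Y_certificate =
    [(4,
       [],
       [Rec 1 6, Rec 1 12, Rec 2 4, Rec 2 8, Rec 2 10, Rec 2 14, Rec 3 2, Rec 3 6,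
        Rec 3 8, Rec 3 10, Rec 3 12, Rec 3 16, Rec 4 1, Rec 4 7, Rec 4 11, Rec 4 17]),
    (3, [Rec 4 0, Rec 4 18], [Anti 4 (-1), Anti 4 1]),
    (2, [Rec 3 0, Rec 3 18, Anti 4 0], [Anti 3 (-1), Anti 3 1]),
    (1, [Rec 2 0, Rec 2 18, Anti 3 (-1), Anti 3 1], [Anti 2 (-2), Anti 2 2])]"

definition G2_T_certificate :: "antiperiod_certificate" where
  "G2_T_certificate =
    [(1, [], [Rec 1 3, Rec 1 5, Rec 1 7, Rec 1 9, Rec 2 4, Rec 2 8]),
    (2, [Rec 1 0, Rec 1 12], [Anti 1 (-3), Anti 1 3])]"

definition G2_Y_certificate :: "antiperiod_certificate" where
  "G2_Y_certificate =
    [(2, [], [Rec 1 4, Rec 1 8, Rec 2 1, Rec 2 5, Rec 2 7, Rec 2 11]),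
    (1, [Rec 2 0, Rec 2 12], [Anti 2 (-1), Anti 2 1])]"

lemma E6_twisted_antiperiodic:
  assumes "simply_laced_relations E6 V"
  shows "twisted_antiperiodic V (Iset E6) (tnum E6 * hdual E6) (omega E6)"
proof (rule twisted_antiperiodic_by_certificate[OF satisfies_sl_recurrences[OF assms],
      where cert = E6_certificate])
  show "antiperiod_cert_ok (sl_recurrences E6) (tnum E6 * hdual E6) (omega E6) [] E6_certificate"
    unfolding sl_recurrences_E6 by code_simp
qed code_simp

lemma E7_twisted_antiperiodic:
  assumes "simply_laced_relations E7 V"
  shows "twisted_antiperiodic V (Iset E7) (tnum E7 * hdual E7) (omega E7)"
proof (rule twisted_antiperiodic_by_certificate[OF satisfies_sl_recurrences[OF assms],
      where cert = E7_certificate])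
  show "antiperiod_cert_ok (sl_recurrences E7) (tnum E7 * hdual E7) (omega E7) [] E7_certificate"
    unfolding sl_recurrences_E7 by code_simp
qed code_simp

lemma E8_twisted_antiperiodic:
  assumes "simply_laced_relations E8 V"
  shows "twisted_antiperiodic V (Iset E8) (tnum E8 * hdual E8) (omega E8)"
proof (rule twisted_antiperiodic_by_certificate[OF satisfies_sl_recurrences[OF assms],
      where cert = E8_certificate])
  show "antiperiod_cert_ok (sl_recurrences E8) (tnum E8 * hdual E8) (omega E8) [] E8_certificate"
    unfolding sl_recurrences_E8 by code_simp
qed code_simp

lemma F4_T_twisted_antiperiodic:
  assumes "T_sys F4 T"
  shows "twisted_antiperiodic T (Iset F4) (tnum F4 * hdual F4) (omega F4)"
  by (rule twisted_antiperiodic_by_certificate[OF satisfies_F4_T_recurrences[OF assms],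
        where cert = F4_T_certificate])
    code_simp+

lemma F4_Y_twisted_antiperiodic:
  assumes "Y_sys F4 Y"
  shows "twisted_antiperiodic Y (Iset F4) (tnum F4 * hdual F4) (omega F4)"
  by (rule twisted_antiperiodic_by_certificate[OF satisfies_F4_Y_recurrences[OF assms],
        where cert = F4_Y_certificate])
    code_simp+

lemma G2_T_twisted_antiperiodic:
  assumes "T_sys G2 T"
  shows "twisted_antiperiodic T (Iset G2) (tnum G2 * hdual G2) (omega G2)"
  by (rule twisted_antiperiodic_by_certificate[OF satisfies_G2_T_recurrences[OF assms],
        where cert = G2_T_certificate])
    code_simp+

lemma G2_Y_twisted_antiperiodic:
  assumes "Y_sys G2 Y"
  shows "twisted_antiperiodic Y (Iset G2) (tnum G2 * hdual G2) (omega G2)"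
  by (rule twisted_antiperiodic_by_certificate[OF satisfies_G2_Y_recurrences[OF assms],
        where cert = G2_Y_certificate])
    code_simp+

lemma simply_laced_twisted_antiperiodic:
  assumes "valid_dynkin X" and "simply_laced X" and "simply_laced_relations X V"
  shows "twisted_antiperiodic V (Iset X) (tnum X * hdual X) (omega X)"
  using assms
proof (cases X)
  case (A r)
  with assms show ?thesis by (blast intro: A_twisted_antiperiodic)
next
  case (D r)
  with assms show ?thesis by (blast intro: D_twisted_antiperiodic)
next
  case E6
  with assms show ?thesis by (blast intro: E6_twisted_antiperiodic)
next
  case E7
  with assms show ?thesis by (blast intro: E7_twisted_antiperiodic)
next
  case E8
  with assms show ?thesis by (blast intro: E8_twisted_antiperiodic)
qed auto

lemma T_sys_simply_laced_relations: "T_sys X T \<Longrightarrow> simply_laced X \<Longrightarrow> simply_laced_relations X T"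
  by (simp add: T_sys_def simply_laced_relations_def)

lemma T_sys_twisted_antiperiodic:
  assumes "valid_dynkin X" and "T_sys X T"
  shows "twisted_antiperiodic T (Iset X) (tnum X * hdual X) (omega X)"
proof (cases "simply_laced X")
  case True
  with assms show ?thesis
    by (blast intro: simply_laced_twisted_antiperiodic T_sys_simply_laced_relations)
next
  case False
  then show ?thesis
  proof (cases X)
    case (B r)
    with assms show ?thesis by (blast intro: B_T_twisted_antiperiodic)
  next
    case (C r)
    with assms show ?thesis by (blast intro: C_T_twisted_antiperiodic)
  next
    case F4
    with assms show ?thesis by (blast intro: F4_T_twisted_antiperiodic)
  next
    case G2
    with assms show ?thesis by (blast intro: G2_T_twisted_antiperiodic)
  qed simp_all
qed

lemma Y_sys_simply_laced_relations: "Y_sys X Y \<Longrightarrow> simply_laced X \<Longrightarrow> simply_laced_relations X Y"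
  by (simp add: Y_sys_def simply_laced_relations_def)

lemma Y_sys_twisted_antiperiodic:
  assumes "valid_dynkin X" and "Y_sys X Y"
  shows "twisted_antiperiodic Y (Iset X) (tnum X * hdual X) (omega X)"
proof (cases "simply_laced X")
  case True
  with assms show ?thesis
    by (blast intro: simply_laced_twisted_antiperiodic Y_sys_simply_laced_relations)
next
  case False
  then show ?thesis
  proof (cases X)
    case (B r)
    with assms show ?thesis by (blast intro: B_Y_twisted_antiperiodic)
  next
    case (C r)
    with assms show ?thesis by (blast intro: C_Y_twisted_antiperiodic)
  next
    case F4
    with assms show ?thesis by (blast intro: F4_Y_twisted_antiperiodic)
  next
    case G2
    with assms show ?thesis by (blast intro: G2_Y_twisted_antiperiodic)
  qed simp_all
qed

theorem theorem8p8:
  fixes X :: dynkin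
  assumes "valid_dynkin X"
  shows "(\<forall>T :: nat \<Rightarrow> int \<Rightarrow> 'g::ab_group_add. T_sys X T \<longrightarrow>
            (\<forall>a\<in>Iset X. \<forall>k.
               T a (k + tnum X * hdual X) = - T (omega X a) k
             \<and> T a (k + 2 * tnum X * hdual X) = T a k))
       \<and> (\<forall>Y :: nat \<Rightarrow> int \<Rightarrow> 'h::ab_group_add. Y_sys X Y \<longrightarrow>
            (\<forall>a\<in>Iset X. \<forall>k.
               Y a (k + tnum X * hdual X) = - Y (omega X a) k
             \<and> Y a (k + 2 * tnum X * hdual X) = Y a k))"
  using twisted_antiperiodic_dynkin[OF assms T_sys_twisted_antiperiodic[OF assms]]
    twisted_antiperiodic_dynkin[OF assms Y_sys_twisted_antiperiodic[OF assms]]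
  by blast

end
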